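(* Let $K/F$ be any quadratic field extension (of any characteristic, separable or not). An element $n\in F$ is a norm from $K$ (i.e. $n=\mathrm{N}_{K/F}(\alpha)$ for some $\alpha\in K$) if and only if $n=-\det[X,Y]$ for some $X,Y\in\mathbb{M}_2(F)$ such that $K$ is the splitting field over $F$ of the characteristic polynomial of $X$.
   Context: $[X,Y]=XY-YX$. *)

theory Defs
  imports "HOL-Algebra.Algebra"
begin

section \<open>2x2 matrices over a ring (entries (a,b,c,d) stand for [[a,b],[c,d]])\<close>

type_synonym 'a mat2 = "'a \<times> 'a \<times> 'a \<times> 'a"

definition mat2_carrier :: "'a set \<Rightarrow> 'a mat2 set" where
  "mat2_carrier S = {(a,b,c,d). a \<in> S \<and> b \<in> S \<and> c \<in> S \<and> d \<in> S}"

definition mat2_mult :: "('a, 'b) ring_scheme \<Rightarrow> 'a mat2 \<Rightarrow> 'a mat2 \<Rightarrow> 'a mat2" where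
  "mat2_mult R M N = (case M of (a,b,c,d) \<Rightarrow> case N of (e,f,g,h) \<Rightarrow>
     ((a \<otimes>\<^bsub>R\<^esub> e) \<oplus>\<^bsub>R\<^esub> (b \<otimes>\<^bsub>R\<^esub> g), (a \<otimes>\<^bsub>R\<^esub> f) \<oplus>\<^bsub>R\<^esub> (b \<otimes>\<^bsub>R\<^esub> h),
      (c \<otimes>\<^bsub>R\<^esub> e) \<oplus>\<^bsub>R\<^esub> (d \<otimes>\<^bsub>R\<^esub> g), (c \<otimes>\<^bsub>R\<^esub> f) \<oplus>\<^bsub>R\<^esub> (d \<otimes>\<^bsub>R\<^esub> h)))"

definition mat2_minus :: "('a, 'b) ring_scheme \<Rightarrow> 'a mat2 \<Rightarrow> 'a mat2 \<Rightarrow> 'a mat2" where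
  "mat2_minus R M N = (case M of (a,b,c,d) \<Rightarrow> case N of (e,f,g,h) \<Rightarrow>
     (a \<ominus>\<^bsub>R\<^esub> e, b \<ominus>\<^bsub>R\<^esub> f, c \<ominus>\<^bsub>R\<^esub> g, d \<ominus>\<^bsub>R\<^esub> h))"

definition mat2_det :: "('a, 'b) ring_scheme \<Rightarrow> 'a mat2 \<Rightarrow> 'a" where
  "mat2_det R M = (case M of (a,b,c,d) \<Rightarrow> (a \<otimes>\<^bsub>R\<^esub> d) \<ominus>\<^bsub>R\<^esub> (b \<otimes>\<^bsub>R\<^esub> c))"

definition mat2_trace :: "('a, 'b) ring_scheme \<Rightarrow> 'a mat2 \<Rightarrow> 'a" where
  "mat2_trace R M = (case M of (a,b,c,d) \<Rightarrow> a \<oplus>\<^bsub>R\<^esub> d)"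

definition mat2_commutator :: "('a, 'b) ring_scheme \<Rightarrow> 'a mat2 \<Rightarrow> 'a mat2 \<Rightarrow> 'a mat2" where
  "mat2_commutator R M N = mat2_minus R (mat2_mult R M N) (mat2_mult R N M)"

definition quadratic_extension :: "('a, 'b) ring_scheme \<Rightarrow> 'a set \<Rightarrow> bool" where
  "quadratic_extension K F \<longleftrightarrow> field K \<and> subfield F K \<and> ring.dimension K 2 F (carrier K)"

text \<open>Norm N_{K/F}(alpha): determinant of the F-linear map x \<mapsto> alpha x of K,
  computed in an F-basis (u, v) of K (the value is independent of the basis).\<close>
definition is_norm_of :: "('a, 'b) ring_scheme \<Rightarrow> 'a set \<Rightarrow> 'a \<Rightarrow> 'a \<Rightarrow> bool" where
  "is_norm_of K F \<alpha> n \<longleftrightarrow>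
     (\<exists>u v a b c d. u \<in> carrier K \<and> v \<in> carrier K \<and>
        ring.independent K F [u, v] \<and> ring.Span K F [u, v] = carrier K \<and>
        a \<in> F \<and> b \<in> F \<and> c \<in> F \<and> d \<in> F \<and>
        \<alpha> \<otimes>\<^bsub>K\<^esub> u = (a \<otimes>\<^bsub>K\<^esub> u) \<oplus>\<^bsub>K\<^esub> (c \<otimes>\<^bsub>K\<^esub> v) \<and>
        \<alpha> \<otimes>\<^bsub>K\<^esub> v = (b \<otimes>\<^bsub>K\<^esub> u) \<oplus>\<^bsub>K\<^esub> (d \<otimes>\<^bsub>K\<^esub> v) \<and>
        n = (a \<otimes>\<^bsub>K\<^esub> d) \<ominus>\<^bsub>K\<^esub> (b \<otimes>\<^bsub>K\<^esub> c))"

text \<open>K is the splitting field over F of the monic quadratic x^2 - s x + t (s, t in F):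
  the polynomial factors as (x - r1)(x - r2) with r1, r2 in K, and K is generated
  over F by r1, r2.\<close>
definition is_splitting_field_quad :: "('a, 'b) ring_scheme \<Rightarrow> 'a set \<Rightarrow> 'a \<Rightarrow> 'a \<Rightarrow> bool" where
  "is_splitting_field_quad K F s t \<longleftrightarrow>
     (\<exists>r1 \<in> carrier K. \<exists>r2 \<in> carrier K.
        r1 \<oplus>\<^bsub>K\<^esub> r2 = s \<and> r1 \<otimes>\<^bsub>K\<^esub> r2 = t \<and>
        generate_field K (F \<union> {r1, r2}) = carrier K)"

text \<open>The characteristic polynomial of the matrix M is x^2 - tr(M) x + det(M).\<close>
definition splits_char_poly :: "('a, 'b) ring_scheme \<Rightarrow> 'a set \<Rightarrow> 'a mat2 \<Rightarrow> bool" where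
  "splits_char_poly K F M \<longleftrightarrow> is_splitting_field_quad K F (mat2_trace K M) (mat2_det K M)"

end

theory Submission
  imports Defs
begin

(* Write X = (a,b,c,d) for the matrix [[a,b],[c,d]], s = tr X, t = det X.  Over a commutative
   ring the commutator [X,Y] is traceless, [X,Y] = (p,q,w,-p), so -det[X,Y] = p^2 + q w, and its
   entries satisfy q c = -p (a - d) - w b.  When c is invertible this rewrites p^2 + q w as
   x^2 + s x y + t y^2, the norm of x + y r for a root r of x^2 - s x + t.

   After these ring identities, we work in a field R with a subfield F of dimension 2: any r
   outside F gives the basis (1, r), and "R is the splitting field of x^2 - s x + t" becomes
   "x^2 - s x + t has a root outside F", which forces c <> 0.  Then
   - a commutator value -det[X,Y] is the norm of x + y r (neg_det_commutator_imp_norm);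
   - a norm N(alpha), alpha outside F, equals det X for the matrix X of alpha (whose
     characteristic polynomial has root alpha by Cayley-Hamilton), and det X = -det[X,Y] for
     Y = (1, d/c, 0, 0); for alpha in F, N(alpha) = alpha^2 = -det[X,(0,alpha,0,0)] with X a
     companion matrix of an element outside F (norm_imp_neg_det_commutator). *)

lemma (in ring) minus_zero_imp_eq:
  assumes "a \<in> carrier R" "b \<in> carrier R" "a \<ominus> b = \<zero>"
  shows "a = b"
proof -
  have "a = (a \<ominus> b) \<oplus> b" using assms(1,2) by algebra
  then show ?thesis using assms by simp
qed

lemma (in cring) mat2_commutator_traceless:
  assumes "a \<in> carrier R" "b \<in> carrier R" "c \<in> carrier R" "d \<in> carrier R"
    and "e \<in> carrier R" "f \<in> carrier R" "g \<in> carrier R" "h \<in> carrier R"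
  shows "mat2_commutator R (a, b, c, d) (e, f, g, h) =
    (b \<otimes> g \<ominus> c \<otimes> f, (a \<ominus> d) \<otimes> f \<ominus> (e \<ominus> h) \<otimes> b,
     (e \<ominus> h) \<otimes> c \<ominus> (a \<ominus> d) \<otimes> g, \<ominus> (b \<otimes> g \<ominus> c \<otimes> f))"
proof -
  have "a \<otimes> e \<oplus> b \<otimes> g \<ominus> (e \<otimes> a \<oplus> f \<otimes> c) = b \<otimes> g \<ominus> c \<otimes> f"
    and "a \<otimes> f \<oplus> b \<otimes> h \<ominus> (e \<otimes> b \<oplus> f \<otimes> d) = (a \<ominus> d) \<otimes> f \<ominus> (e \<ominus> h) \<otimes> b"
    and "c \<otimes> e \<oplus> d \<otimes> g \<ominus> (g \<otimes> a \<oplus> h \<otimes> c) = (e \<ominus> h) \<otimes> c \<ominus> (a \<ominus> d) \<otimes> g"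
    and "c \<otimes> f \<oplus> d \<otimes> h \<ominus> (g \<otimes> b \<oplus> h \<otimes> d) = \<ominus> (b \<otimes> g \<ominus> c \<otimes> f)"
    using assms by algebra+
  then show ?thesis
    unfolding mat2_commutator_def mat2_minus_def mat2_mult_def by simp
qed

lemma (in cring) neg_det_traceless:
  assumes "p \<in> carrier R" "q \<in> carrier R" "r \<in> carrier R"
  shows "\<ominus> mat2_det R (p, q, r, \<ominus> p) = p \<otimes> p \<oplus> q \<otimes> r"
  unfolding mat2_det_def using assms by simp algebra

text \<open>Commutators with two special matrices; they realise determinants and squares as
  minus determinants of commutators.\<close>
lemma (in cring) neg_det_commutator_elementary:
  assumes "a \<in> carrier R" "b \<in> carrier R" "c \<in> carrier R" "d \<in> carrier R" "f \<in> carrier R"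
  shows "\<ominus> mat2_det R (mat2_commutator R (a, b, c, d) (\<one>, f, \<zero>, \<zero>)) =
    (a \<otimes> d \<ominus> b \<otimes> c) \<oplus> (f \<otimes> c \<ominus> d) \<otimes> (f \<otimes> c \<oplus> a)"
  unfolding mat2_det_def mat2_commutator_def mat2_minus_def mat2_mult_def prod.case
  using assms by algebra

lemma (in cring) neg_det_commutator_nilpotent:
  assumes "a \<in> carrier R" "b \<in> carrier R" "c \<in> carrier R" "d \<in> carrier R" "z \<in> carrier R"
  shows "\<ominus> mat2_det R (mat2_commutator R (a, b, c, d) (\<zero>, z, \<zero>, \<zero>)) = (c \<otimes> z) \<otimes> (c \<otimes> z)"
  unfolding mat2_det_def mat2_commutator_def mat2_minus_def mat2_mult_def prod.case
  using assms by algebra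

lemma (in field) traceless_form_as_norm_form:
  assumes "p \<in> carrier R" "q \<in> carrier R" "w \<in> carrier R"
    and "a \<in> carrier R" "b \<in> carrier R" "c \<in> carrier R" "d \<in> carrier R" "c \<noteq> \<zero>"
    and qc: "q \<otimes> c = \<ominus> (p \<otimes> (a \<ominus> d)) \<ominus> w \<otimes> b"
  defines "y \<equiv> w \<otimes> inv c"
  defines "x \<equiv> \<ominus> p \<ominus> y \<otimes> d"
  shows "p \<otimes> p \<oplus> q \<otimes> w = x \<otimes> x \<oplus> x \<otimes> y \<otimes> (a \<oplus> d) \<oplus> y \<otimes> y \<otimes> (a \<otimes> d \<ominus> b \<otimes> c)"
proof -
  have invc: "inv c \<in> carrier R" "inv c \<otimes> c = \<one>"
    using assms(6,8) field_Units by auto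
  have xy: "x \<in> carrier R" "y \<in> carrier R" using assms invc by (simp_all add: x_def y_def)
  have yc: "y \<otimes> c = w" using assms invc by (simp add: y_def m_assoc)
  have xc: "x \<otimes> c = \<ominus> (p \<otimes> c) \<ominus> w \<otimes> d"
  proof -
    have "x \<otimes> c = \<ominus> (p \<otimes> c) \<ominus> (y \<otimes> c) \<otimes> d"
      unfolding x_def using assms(1,6,7) xy(2) by algebra
    then show ?thesis by (simp only: yc)
  qed
  text \<open>Multiply by c^2, substitute x c and y c, and use the relation for q c.\<close>
  have "(x \<otimes> x \<oplus> x \<otimes> y \<otimes> (a \<oplus> d) \<oplus> y \<otimes> y \<otimes> (a \<otimes> d \<ominus> b \<otimes> c)) \<otimes> (c \<otimes> c)
      = (x \<otimes> c) \<otimes> (x \<otimes> c) \<oplus> (x \<otimes> c) \<otimes> (y \<otimes> c) \<otimes> (a \<oplus> d)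
        \<oplus> (y \<otimes> c) \<otimes> (y \<otimes> c) \<otimes> (a \<otimes> d \<ominus> b \<otimes> c)"
    using assms(1-7) xy by algebra
  also have "\<dots> = (\<ominus> (p \<otimes> c) \<ominus> w \<otimes> d) \<otimes> (\<ominus> (p \<otimes> c) \<ominus> w \<otimes> d)
        \<oplus> (\<ominus> (p \<otimes> c) \<ominus> w \<otimes> d) \<otimes> w \<otimes> (a \<oplus> d) \<oplus> w \<otimes> w \<otimes> (a \<otimes> d \<ominus> b \<otimes> c)"
    by (simp only: xc yc)
  also have "\<dots> = p \<otimes> p \<otimes> (c \<otimes> c) \<oplus> (\<ominus> (p \<otimes> (a \<ominus> d)) \<ominus> w \<otimes> b) \<otimes> (w \<otimes> c)"
    using assms(1-7) by algebra
  also have "\<dots> = p \<otimes> p \<otimes> (c \<otimes> c) \<oplus> (q \<otimes> c) \<otimes> (w \<otimes> c)"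
    by (simp only: qc)
  also have "\<dots> = (p \<otimes> p \<oplus> q \<otimes> w) \<otimes> (c \<otimes> c)"
    using assms(1-7) by algebra
  finally have "(x \<otimes> x \<oplus> x \<otimes> y \<otimes> (a \<oplus> d) \<oplus> y \<otimes> y \<otimes> (a \<otimes> d \<ominus> b \<otimes> c)) \<otimes> (c \<otimes> c)
      = (p \<otimes> p \<oplus> q \<otimes> w) \<otimes> (c \<otimes> c)" .
  moreover have "c \<otimes> c \<noteq> \<zero>" using assms(6,8) integral_iff by auto
  ultimately show ?thesis using assms xy by (simp add: m_rcancel)
qed

text \<open>Cayley-Hamilton for the matrix (a, b, c, d) of multiplication by alpha on the span of
  u, v: alpha is a root of its characteristic polynomial (u <> 0 suffices in a domain).\<close>
lemma (in domain) cayley_hamilton_2: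
  assumes "\<alpha> \<in> carrier R" "u \<in> carrier R" "v \<in> carrier R" "u \<noteq> \<zero>"
    and "a \<in> carrier R" "b \<in> carrier R" "c \<in> carrier R" "d \<in> carrier R"
    and \<alpha>u: "\<alpha> \<otimes> u = a \<otimes> u \<oplus> c \<otimes> v" and \<alpha>v: "\<alpha> \<otimes> v = b \<otimes> u \<oplus> d \<otimes> v"
  shows "\<alpha> \<otimes> \<alpha> \<ominus> (a \<oplus> d) \<otimes> \<alpha> \<oplus> (a \<otimes> d \<ominus> b \<otimes> c) = \<zero>"
proof -
  have "(\<alpha> \<otimes> \<alpha> \<ominus> (a \<oplus> d) \<otimes> \<alpha> \<oplus> (a \<otimes> d \<ominus> b \<otimes> c)) \<otimes> u
      = \<alpha> \<otimes> (\<alpha> \<otimes> u) \<ominus> (a \<oplus> d) \<otimes> (\<alpha> \<otimes> u) \<oplus> (a \<otimes> d \<ominus> b \<otimes> c) \<otimes> u"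
    using assms(1-3,5-8) by algebra
  also have "\<dots> = \<alpha> \<otimes> (a \<otimes> u \<oplus> c \<otimes> v) \<ominus> (a \<oplus> d) \<otimes> (a \<otimes> u \<oplus> c \<otimes> v) \<oplus> (a \<otimes> d \<ominus> b \<otimes> c) \<otimes> u"
    by (simp only: \<alpha>u)
  also have "\<dots> = a \<otimes> (\<alpha> \<otimes> u) \<oplus> c \<otimes> (\<alpha> \<otimes> v) \<ominus> (a \<oplus> d) \<otimes> (a \<otimes> u \<oplus> c \<otimes> v)
      \<oplus> (a \<otimes> d \<ominus> b \<otimes> c) \<otimes> u"
    using assms(1-3,5-8) by algebra
  also have "\<dots> = a \<otimes> (a \<otimes> u \<oplus> c \<otimes> v) \<oplus> c \<otimes> (b \<otimes> u \<oplus> d \<otimes> v) \<ominus> (a \<oplus> d) \<otimes> (a \<otimes> u \<oplus> c \<otimes> v)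
      \<oplus> (a \<otimes> d \<ominus> b \<otimes> c) \<otimes> u"
    by (simp only: \<alpha>u \<alpha>v)
  also have "\<dots> = \<zero>" using assms(1-3,5-8) by algebra
  finally show ?thesis using assms integral_iff by auto
qed

lemma (in domain) root_of_split_quadratic:
  assumes "r \<in> carrier R" "a \<in> carrier R" "d \<in> carrier R"
    and root: "r \<otimes> r \<ominus> (a \<oplus> d) \<otimes> r \<oplus> a \<otimes> d = \<zero>"
  shows "r = a \<or> r = d"
proof -
  have "(r \<ominus> a) \<otimes> (r \<ominus> d) = r \<otimes> r \<ominus> (a \<oplus> d) \<otimes> r \<oplus> a \<otimes> d"
    using assms(1-3) by algebra
  then have "r \<ominus> a = \<zero> \<or> r \<ominus> d = \<zero>" using root assms(1-3) integral_iff by simp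
  then show ?thesis using minus_zero_imp_eq assms(1-3) by blast
qed

context field
begin

context
  fixes F :: "'a set"
  assumes subF: "subfield F R"
begin

lemma F_subset: "F \<subseteq> carrier R"
  using subfieldE(3)[OF subF] .

lemma F_closed:
  "\<zero> \<in> F" "\<one> \<in> F"
  "x \<in> F \<Longrightarrow> \<ominus> x \<in> F"
  "x \<in> F \<Longrightarrow> y \<in> F \<Longrightarrow> x \<oplus> y \<in> F"
  "x \<in> F \<Longrightarrow> y \<in> F \<Longrightarrow> x \<ominus> y \<in> F"
  "x \<in> F \<Longrightarrow> y \<in> F \<Longrightarrow> x \<otimes> y \<in> F"
  "x \<in> F \<Longrightarrow> x \<noteq> \<zero> \<Longrightarrow> inv x \<in> F"
  using subringE[OF subfieldE(1)[OF subF]] subfield_m_inv(1)[OF subF]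
  by (auto simp: minus_eq)

lemma span_pair_iff:
  assumes "u \<in> carrier R" "v \<in> carrier R"
  shows "w \<in> Span F [u, v] \<longleftrightarrow> (\<exists>x\<in>F. \<exists>y\<in>F. w = x \<otimes> u \<oplus> y \<otimes> v)"
proof -
  have line: "z \<in> line_extension F v {\<zero>} \<longleftrightarrow> (\<exists>y\<in>F. z = y \<otimes> v)" for z
    using assms F_subset by (auto simp: line_extension_mem_iff subset_iff)
  have "w \<in> Span F [u, v] \<longleftrightarrow> (\<exists>x\<in>F. \<exists>z\<in>line_extension F v {\<zero>}. w = x \<otimes> u \<oplus> z)"
    by (simp add: line_extension_mem_iff)
  also have "\<dots> \<longleftrightarrow> (\<exists>x\<in>F. \<exists>y\<in>F. w = x \<otimes> u \<oplus> y \<otimes> v)"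
    by (simp only: Bex_def line) blast
  finally show ?thesis .
qed

lemma coordinates_unique:
  assumes ind: "independent F [u, v]" and "x \<in> F" "y \<in> F" "x' \<in> F" "y' \<in> F"
    and eq: "x \<otimes> u \<oplus> y \<otimes> v = x' \<otimes> u \<oplus> y' \<otimes> v"
  shows "x = x'" "y = y'"
proof -
  have uv: "u \<in> carrier R" "v \<in> carrier R" using independent_in_carrier[OF ind] by auto
  define w where "w = x \<otimes> u \<oplus> y \<otimes> v"
  have "w \<in> Span F [u, v]" unfolding w_def using span_pair_iff[OF uv] assms(2,3) by blast
  then have "\<exists>!Ks. set Ks \<subseteq> F \<and> length Ks = length [u, v] \<and> w = combine Ks [u, v]"
    by (rule unique_decomposition[OF subF ind])
  moreover have "set [x, y] \<subseteq> F \<and> length [x, y] = length [u, v] \<and> w = combine [x, y] [u, v]"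
    using assms(2,3) uv F_subset by (auto simp: w_def subset_iff)
  moreover have "set [x', y'] \<subseteq> F \<and> length [x', y'] = length [u, v] \<and> w = combine [x', y'] [u, v]"
    using assms(4,5) uv F_subset by (auto simp: w_def eq subset_iff)
  ultimately have "[x, y] = [x', y']" by blast
  then show "x = x'" "y = y'" by auto
qed

lemma det_as_neg_det_commutator:
  assumes abcd: "a \<in> F" "b \<in> F" "c \<in> F" "d \<in> F" and "c \<noteq> \<zero>"
  shows "\<exists>N \<in> mat2_carrier F. a \<otimes> d \<ominus> b \<otimes> c = \<ominus> mat2_det R (mat2_commutator R (a, b, c, d) N)"
proof
  define f where "f = d \<otimes> inv c"
  have fF: "f \<in> F" unfolding f_def using abcd assms(5) by (simp add: F_closed)
  have c: "a \<in> carrier R" "b \<in> carrier R" "c \<in> carrier R" "d \<in> carrier R" "f \<in> carrier R"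
    using abcd fF F_subset by auto
  have "inv c \<otimes> c = \<one>" using c(3) assms(5) field_Units by auto
  then have fc: "f \<otimes> c = d" unfolding f_def using c(3,4) assms(5) field_Units by (simp add: m_assoc)
  have "\<ominus> mat2_det R (mat2_commutator R (a, b, c, d) (\<one>, f, \<zero>, \<zero>)) =
      (a \<otimes> d \<ominus> b \<otimes> c) \<oplus> (f \<otimes> c \<ominus> d) \<otimes> (f \<otimes> c \<oplus> a)"
    using c by (rule neg_det_commutator_elementary)
  also have "\<dots> = a \<otimes> d \<ominus> b \<otimes> c" unfolding fc using c by (simp add: r_neg minus_eq)
  finally show "a \<otimes> d \<ominus> b \<otimes> c = \<ominus> mat2_det R (mat2_commutator R (a, b, c, d) (\<one>, f, \<zero>, \<zero>))" ..
  show "(\<one>, f, \<zero>, \<zero>) \<in> mat2_carrier F" using fF F_closed(1,2) by (simp add: mat2_carrier_def)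
qed

lemma neg_det_commutator_as_norm_form:
  assumes abcd: "a \<in> F" "b \<in> F" "c \<in> F" "d \<in> F" and "c \<noteq> \<zero>"
    and efgh: "e \<in> F" "f \<in> F" "g \<in> F" "h \<in> F"
  shows "\<exists>x \<in> F. \<exists>y \<in> F. \<ominus> mat2_det R (mat2_commutator R (a, b, c, d) (e, f, g, h))
    = x \<otimes> x \<oplus> x \<otimes> y \<otimes> (a \<oplus> d) \<oplus> y \<otimes> y \<otimes> (a \<otimes> d \<ominus> b \<otimes> c)"
proof -
  have cs: "a \<in> carrier R" "b \<in> carrier R" "c \<in> carrier R" "d \<in> carrier R"
    "e \<in> carrier R" "f \<in> carrier R" "g \<in> carrier R" "h \<in> carrier R"
    using abcd efgh F_subset by auto
  define p where "p = b \<otimes> g \<ominus> c \<otimes> f"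
  define q where "q = (a \<ominus> d) \<otimes> f \<ominus> (e \<ominus> h) \<otimes> b"
  define w where "w = (e \<ominus> h) \<otimes> c \<ominus> (a \<ominus> d) \<otimes> g"
  have pqw: "p \<in> F" "w \<in> F" using abcd efgh by (simp_all add: p_def w_def F_closed)
  have pqw_c: "p \<in> carrier R" "q \<in> carrier R" "w \<in> carrier R"
    using cs by (simp_all add: p_def q_def w_def)
  have "mat2_commutator R (a, b, c, d) (e, f, g, h) = (p, q, w, \<ominus> p)"
    unfolding p_def q_def w_def using cs by (rule mat2_commutator_traceless)
  then have det: "\<ominus> mat2_det R (mat2_commutator R (a, b, c, d) (e, f, g, h)) = p \<otimes> p \<oplus> q \<otimes> w"
    using neg_det_traceless[OF pqw_c] by simp
  have "q \<otimes> c = \<ominus> (p \<otimes> (a \<ominus> d)) \<ominus> w \<otimes> b" unfolding p_def q_def w_def using cs by algebra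
  moreover define y where "y = w \<otimes> inv c"
  moreover define x where "x = \<ominus> p \<ominus> y \<otimes> d"
  ultimately have "p \<otimes> p \<oplus> q \<otimes> w
      = x \<otimes> x \<oplus> x \<otimes> y \<otimes> (a \<oplus> d) \<oplus> y \<otimes> y \<otimes> (a \<otimes> d \<ominus> b \<otimes> c)"
    using traceless_form_as_norm_form[OF pqw_c cs(1-4) \<open>c \<noteq> \<zero>\<close>] by blast
  moreover have "x \<in> F" "y \<in> F" using pqw abcd \<open>c \<noteq> \<zero>\<close> by (simp_all add: x_def y_def F_closed)
  ultimately show ?thesis unfolding det by blast
qed

context
  assumes dim: "dimension 2 F (carrier R)"
begin

lemma carrier_neq_F: "carrier R \<noteq> F"
proof
  assume "carrier R = F"
  then have "dimension 1 F (carrier R)" using dimension_one[OF subF] by simp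
  from dimension_is_inj[OF subF dim this] show False by simp
qed

lemma power_basis:
  assumes \<beta>: "\<beta> \<in> carrier R" "\<beta> \<notin> F"
  shows "independent F [\<one>, \<beta>]" "Span F [\<one>, \<beta>] = carrier R"
proof -
  have "\<one> \<notin> Span F [\<beta>]"
  proof
    assume "\<one> \<in> Span F [\<beta>]"
    then obtain k where k: "k \<in> F" "\<one> = k \<otimes> \<beta>"
      using \<beta> F_subset by (auto simp: line_extension_mem_iff subset_iff)
    then have "k \<noteq> \<zero>" using \<beta> by auto
    have "inv k = \<beta>"
      using comm_inv_char[of k \<beta>] k \<beta>(1) F_subset by auto
    then show False using F_closed(7) k \<open>k \<noteq> \<zero>\<close> \<beta>(2) by auto
  qed
  moreover have "\<beta> \<noteq> \<zero>" using \<beta> F_closed(1) by auto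
  then have "independent F [\<beta>]" by (intro li_Cons) (use \<beta> in auto)
  ultimately show ind: "independent F [\<one>, \<beta>]" by (rule li_Cons[OF one_closed])
  show "Span F [\<one>, \<beta>] = carrier R"
    using independent_length_eq_dimension[OF subF dim ind] \<beta> by simp
qed

lemma power_basis_coordinates:
  assumes "\<beta> \<in> carrier R" "\<beta> \<notin> F" "w \<in> carrier R"
  obtains x y where "x \<in> F" "y \<in> F" "w = x \<oplus> y \<otimes> \<beta>"
proof -
  have "w \<in> Span F [\<one>, \<beta>]" using power_basis assms by simp
  then obtain x y where "x \<in> F" "y \<in> F" "w = x \<otimes> \<one> \<oplus> y \<otimes> \<beta>"
    using span_pair_iff[of \<one> \<beta> w] assms(1) by auto
  then show ?thesis using that F_subset by auto
qed

lemma generate_field_eq_carrier: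
  assumes "r \<in> carrier R" "r \<notin> F" "r' \<in> carrier R"
  shows "generate_field R (F \<union> {r, r'}) = carrier R"
proof
  have gens: "F \<union> {r, r'} \<subseteq> carrier R" using F_subset assms by auto
  then show "generate_field R (F \<union> {r, r'}) \<subseteq> carrier R" by (rule generate_field_incl)
  show "carrier R \<subseteq> generate_field R (F \<union> {r, r'})"
  proof
    fix w assume "w \<in> carrier R"
    then obtain x y where xy: "x \<in> F" "y \<in> F" and w: "w = x \<oplus> y \<otimes> r"
      by (rule power_basis_coordinates[OF assms(1,2)])
    have "x \<in> generate_field R (F \<union> {r, r'})" "y \<in> generate_field R (F \<union> {r, r'})"
      and "r \<in> generate_field R (F \<union> {r, r'})"
      using xy by (simp_all add: generate_field.incl)
    then show "w \<in> generate_field R (F \<union> {r, r'})"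
      unfolding w by (intro generate_field.eng_add generate_field.eng_mult)
  qed
qed

lemma splitting_field_quad_iff:
  assumes st: "s \<in> F" "t \<in> F"
  shows "is_splitting_field_quad R F s t \<longleftrightarrow>
    (\<exists>r \<in> carrier R. r \<notin> F \<and> r \<otimes> r \<ominus> s \<otimes> r \<oplus> t = \<zero>)"
proof
  assume "is_splitting_field_quad R F s t"
  then obtain r r' where r: "r \<in> carrier R" "r' \<in> carrier R"
    and sum: "r \<oplus> r' = s" and prod: "r \<otimes> r' = t"
    and gen: "generate_field R (F \<union> {r, r'}) = carrier R"
    unfolding is_splitting_field_quad_def by blast
  have "r \<otimes> r \<ominus> (r \<oplus> r') \<otimes> r \<oplus> r \<otimes> r' = \<zero>" using r by algebra
  then have root: "r \<otimes> r \<ominus> s \<otimes> r \<oplus> t = \<zero>" by (simp only: sum prod)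
  have "r \<notin> F"
  proof
    assume rF: "r \<in> F"
    have "r' = (r \<oplus> r') \<ominus> r" using r by algebra
    then have "r' \<in> F" using F_closed(5)[OF st(1) rF] by (simp only: sum)
    then have "F \<union> {r, r'} = F" using rF by blast
    moreover have "generate_field R F = F"
      using generate_field_min_subfield1[OF F_subset subF] generate_field.incl[of _ F R] by blast
    ultimately show False using gen carrier_neq_F by simp
  qed
  then show "\<exists>r \<in> carrier R. r \<notin> F \<and> r \<otimes> r \<ominus> s \<otimes> r \<oplus> t = \<zero>"
    using r(1) root by blast
next
  assume "\<exists>r \<in> carrier R. r \<notin> F \<and> r \<otimes> r \<ominus> s \<otimes> r \<oplus> t = \<zero>"
  then obtain r where r: "r \<in> carrier R" "r \<notin> F" and root: "r \<otimes> r \<ominus> s \<otimes> r \<oplus> t = \<zero>"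
    by blast
  have sc: "s \<in> carrier R" "t \<in> carrier R" using st F_subset by auto
  have r': "s \<ominus> r \<in> carrier R" using r(1) sc(1) by simp
  have sum: "r \<oplus> (s \<ominus> r) = s" using r(1) sc by algebra
  have "r \<otimes> (s \<ominus> r) = t \<ominus> (r \<otimes> r \<ominus> s \<otimes> r \<oplus> t)" using r(1) sc by algebra
  also have "\<dots> = t" unfolding root using sc(2) by (simp add: minus_eq)
  finally have prod: "r \<otimes> (s \<ominus> r) = t" .
  have gen: "generate_field R (F \<union> {r, s \<ominus> r}) = carrier R"
    by (rule generate_field_eq_carrier[OF r r'])
  show "is_splitting_field_quad R F s t"
    unfolding is_splitting_field_quad_def using r(1) r' sum prod gen by blast
qed

lemma splits_char_poly_iff:
  assumes "a \<in> F" "b \<in> F" "c \<in> F" "d \<in> F"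
  shows "splits_char_poly R F (a, b, c, d) \<longleftrightarrow>
    (\<exists>r \<in> carrier R. r \<notin> F \<and> r \<otimes> r \<ominus> (a \<oplus> d) \<otimes> r \<oplus> (a \<otimes> d \<ominus> b \<otimes> c) = \<zero>)"
  unfolding splits_char_poly_def mat2_trace_def mat2_det_def prod.case
  using assms by (simp add: splitting_field_quad_iff F_closed)

text \<open>A matrix whose characteristic polynomial has R as splitting field is not lower
  triangular: otherwise its roots a, d lie in F.\<close>
lemma splits_char_poly_lower_left_nonzero:
  assumes "a \<in> F" "b \<in> F" "c \<in> F" "d \<in> F" and split: "splits_char_poly R F (a, b, c, d)"
  shows "c \<noteq> \<zero>"
proof
  assume "c = \<zero>"
  obtain r where r: "r \<in> carrier R" "r \<notin> F"
    and root: "r \<otimes> r \<ominus> (a \<oplus> d) \<otimes> r \<oplus> (a \<otimes> d \<ominus> b \<otimes> c) = \<zero>"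
    using split unfolding splits_char_poly_iff[OF assms(1-4)] by blast
  have cs: "a \<in> carrier R" "b \<in> carrier R" "d \<in> carrier R" using assms(1,2,4) F_subset by auto
  have "r \<otimes> r \<ominus> (a \<oplus> d) \<otimes> r \<oplus> a \<otimes> d = \<zero>"
    using root cs \<open>c = \<zero>\<close> by (simp add: minus_eq)
  then have "r = a \<or> r = d" by (rule root_of_split_quadratic[OF r(1) cs(1,3)])
  then show False using r(2) assms(1,4) by auto
qed

text \<open>The norm of x + y r for a root r outside F of x^2 - s x + t, computed in the basis
  (1, r), where multiplication by x + y r has matrix (x, -y t, y, x + y s).\<close>
lemma norm_in_power_basis:
  assumes r: "r \<in> carrier R" "r \<notin> F" and st: "s \<in> F" "t \<in> F"
    and root: "r \<otimes> r \<ominus> s \<otimes> r \<oplus> t = \<zero>" and xy: "x \<in> F" "y \<in> F"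
  shows "is_norm_of R F (x \<oplus> y \<otimes> r) (x \<otimes> x \<oplus> x \<otimes> y \<otimes> s \<oplus> y \<otimes> y \<otimes> t)"
proof -
  have c: "s \<in> carrier R" "t \<in> carrier R" "x \<in> carrier R" "y \<in> carrier R"
    using st xy F_subset by auto
  have on_one: "(x \<oplus> y \<otimes> r) \<otimes> \<one> = x \<otimes> \<one> \<oplus> y \<otimes> r" using r(1) c by algebra
  have "(x \<oplus> y \<otimes> r) \<otimes> r \<ominus> ((\<ominus> (y \<otimes> t)) \<otimes> \<one> \<oplus> (x \<oplus> y \<otimes> s) \<otimes> r)
      = y \<otimes> (r \<otimes> r \<ominus> s \<otimes> r \<oplus> t)" using r(1) c by algebra
  also have "\<dots> = \<zero>" unfolding root using c(4) by simp
  finally have on_r: "(x \<oplus> y \<otimes> r) \<otimes> r = (\<ominus> (y \<otimes> t)) \<otimes> \<one> \<oplus> (x \<oplus> y \<otimes> s) \<otimes> r"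
    by (rule minus_zero_imp_eq[rotated 2]) (use r(1) c in simp_all)
  have det: "x \<otimes> x \<oplus> x \<otimes> y \<otimes> s \<oplus> y \<otimes> y \<otimes> t = x \<otimes> (x \<oplus> y \<otimes> s) \<ominus> (\<ominus> (y \<otimes> t)) \<otimes> y"
    using c by algebra
  have entries: "\<ominus> (y \<otimes> t) \<in> F" "x \<oplus> y \<otimes> s \<in> F" using st xy by (simp_all add: F_closed)
  show ?thesis
    unfolding is_norm_of_def
    apply (rule exI[of _ \<one>], rule exI[of _ r], rule exI[of _ x], rule exI[of _ "\<ominus> (y \<otimes> t)"])
    apply (rule exI[of _ y], rule exI[of _ "x \<oplus> y \<otimes> s"])
    using power_basis[OF r] r(1) xy entries on_one on_r det by simp
qed

lemma square_as_neg_det_commutator: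
  assumes "z \<in> F"
  shows "\<exists>M \<in> mat2_carrier F. \<exists>N \<in> mat2_carrier F.
    z \<otimes> z = \<ominus> mat2_det R (mat2_commutator R M N) \<and> splits_char_poly R F M"
proof -
  obtain \<beta> where \<beta>: "\<beta> \<in> carrier R" "\<beta> \<notin> F" using carrier_neq_F F_subset by blast
  obtain x y where xy: "x \<in> F" "y \<in> F" and sq: "\<beta> \<otimes> \<beta> = x \<oplus> y \<otimes> \<beta>"
    by (rule power_basis_coordinates[OF \<beta> m_closed[OF \<beta>(1) \<beta>(1)]])
  have c: "x \<in> carrier R" "y \<in> carrier R" "z \<in> carrier R" using xy assms F_subset by auto
  have "\<beta> \<otimes> \<beta> \<ominus> (\<zero> \<oplus> y) \<otimes> \<beta> \<oplus> (\<zero> \<otimes> y \<ominus> x \<otimes> \<one>) = \<beta> \<otimes> \<beta> \<ominus> (x \<oplus> y \<otimes> \<beta>)"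
    using \<beta>(1) c by algebra
  also have "\<dots> = \<zero>" unfolding sq[symmetric] using \<beta>(1) by (simp add: r_neg minus_eq)
  finally have root: "\<beta> \<otimes> \<beta> \<ominus> (\<zero> \<oplus> y) \<otimes> \<beta> \<oplus> (\<zero> \<otimes> y \<ominus> x \<otimes> \<one>) = \<zero>" .
  have split: "splits_char_poly R F (\<zero>, x, \<one>, y)"
    unfolding splits_char_poly_iff[OF F_closed(1) xy(1) F_closed(2) xy(2)] using \<beta> root by blast
  have "\<ominus> mat2_det R (mat2_commutator R (\<zero>, x, \<one>, y) (\<zero>, z, \<zero>, \<zero>)) = (\<one> \<otimes> z) \<otimes> (\<one> \<otimes> z)"
    by (rule neg_det_commutator_nilpotent) (use c in simp_all)
  then have square: "z \<otimes> z = \<ominus> mat2_det R (mat2_commutator R (\<zero>, x, \<one>, y) (\<zero>, z, \<zero>, \<zero>))"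
    using c(3) by simp
  have "(\<zero>, x, \<one>, y) \<in> mat2_carrier F" "(\<zero>, z, \<zero>, \<zero>) \<in> mat2_carrier F"
    using xy assms F_closed(1,2) by (simp_all add: mat2_carrier_def)
  then show ?thesis using split square by blast
qed

lemma norm_imp_neg_det_commutator:
  assumes \<alpha>: "\<alpha> \<in> carrier R" and norm: "is_norm_of R F \<alpha> n"
  shows "\<exists>M \<in> mat2_carrier F. \<exists>N \<in> mat2_carrier F.
    n = \<ominus> mat2_det R (mat2_commutator R M N) \<and> splits_char_poly R F M"
proof -
  obtain u v a b c d where uv: "u \<in> carrier R" "v \<in> carrier R" and ind: "independent F [u, v]"
    and abcd: "a \<in> F" "b \<in> F" "c \<in> F" "d \<in> F"
    and \<alpha>u: "\<alpha> \<otimes> u = a \<otimes> u \<oplus> c \<otimes> v" and \<alpha>v: "\<alpha> \<otimes> v = b \<otimes> u \<oplus> d \<otimes> v"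
    and n: "n = a \<otimes> d \<ominus> b \<otimes> c"
    using norm unfolding is_norm_of_def by blast
  have abcd_c: "a \<in> carrier R" "b \<in> carrier R" "c \<in> carrier R" "d \<in> carrier R"
    using abcd F_subset by auto
  show ?thesis
  proof (cases "\<alpha> \<in> F")
    case False
    text \<open>X is the matrix of alpha itself; its characteristic polynomial has root alpha.\<close>
    have "u \<noteq> \<zero>"
    proof
      assume "u = \<zero>"
      moreover have "\<zero> \<in> Span F [v]" using Span_subgroup_props(2)[OF subF, of "[v]"] uv(2) by simp
      ultimately show False using independent_backwards(1)[OF ind] by simp
    qed
    then have "\<alpha> \<otimes> \<alpha> \<ominus> (a \<oplus> d) \<otimes> \<alpha> \<oplus> (a \<otimes> d \<ominus> b \<otimes> c) = \<zero>"
      using cayley_hamilton_2[OF \<alpha> uv _ abcd_c \<alpha>u \<alpha>v] by blast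
    then have split: "splits_char_poly R F (a, b, c, d)"
      unfolding splits_char_poly_iff[OF abcd] using \<alpha> False by blast
    then obtain N where "N \<in> mat2_carrier F" "n = \<ominus> mat2_det R (mat2_commutator R (a, b, c, d) N)"
      using det_as_neg_det_commutator[OF abcd splits_char_poly_lower_left_nonzero[OF abcd]] n
      by blast
    moreover have "(a, b, c, d) \<in> mat2_carrier F" using abcd by (simp add: mat2_carrier_def)
    ultimately show ?thesis using split by blast
  next
    case True
    text \<open>alpha acts as a scalar, so its norm is alpha^2.\<close>
    have "\<alpha> \<otimes> u \<oplus> \<zero> \<otimes> v = a \<otimes> u \<oplus> c \<otimes> v" using \<alpha>u \<alpha> uv abcd_c by simp
    then have ac: "\<alpha> = a" "\<zero> = c" using coordinates_unique[OF ind True F_closed(1) abcd(1,3)] by auto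
    have "\<zero> \<otimes> u \<oplus> \<alpha> \<otimes> v = b \<otimes> u \<oplus> d \<otimes> v" using \<alpha>v \<alpha> uv abcd_c by simp
    then have bd: "\<zero> = b" "\<alpha> = d" using coordinates_unique[OF ind F_closed(1) True abcd(2,4)] by auto
    have "n = \<alpha> \<otimes> \<alpha>" using n \<alpha> by (simp add: ac[symmetric] bd[symmetric] minus_eq)
    then show ?thesis using square_as_neg_det_commutator[OF True] by simp
  qed
qed

text \<open>Conversely, minus the determinant of such a commutator is the norm of x + y r, where r
  is a root outside F of the characteristic polynomial of X.\<close>
lemma neg_det_commutator_imp_norm:
  assumes M: "M \<in> mat2_carrier F" and N: "N \<in> mat2_carrier F" and split: "splits_char_poly R F M"
  shows "\<exists>\<alpha> \<in> carrier R. is_norm_of R F \<alpha> (\<ominus> mat2_det R (mat2_commutator R M N))"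
proof -
  obtain a b c d e f g h where MN: "M = (a, b, c, d)" "N = (e, f, g, h)"
    using prod_cases4 by metis
  have abcd: "a \<in> F" "b \<in> F" "c \<in> F" "d \<in> F" and efgh: "e \<in> F" "f \<in> F" "g \<in> F" "h \<in> F"
    using M N unfolding MN mat2_carrier_def by auto
  obtain r where r: "r \<in> carrier R" "r \<notin> F"
    and root: "r \<otimes> r \<ominus> (a \<oplus> d) \<otimes> r \<oplus> (a \<otimes> d \<ominus> b \<otimes> c) = \<zero>"
    using split unfolding MN splits_char_poly_iff[OF abcd] by blast
  have "c \<noteq> \<zero>" using splits_char_poly_lower_left_nonzero[OF abcd] split MN by simp
  then obtain x y where xy: "x \<in> F" "y \<in> F" and form: "\<ominus> mat2_det R (mat2_commutator R M N)
      = x \<otimes> x \<oplus> x \<otimes> y \<otimes> (a \<oplus> d) \<oplus> y \<otimes> y \<otimes> (a \<otimes> d \<ominus> b \<otimes> c)"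
    using neg_det_commutator_as_norm_form[OF abcd _ efgh] MN by blast
  have st: "a \<oplus> d \<in> F" "a \<otimes> d \<ominus> b \<otimes> c \<in> F" using abcd by (simp_all add: F_closed)
  have "is_norm_of R F (x \<oplus> y \<otimes> r) (\<ominus> mat2_det R (mat2_commutator R M N))"
    unfolding form by (rule norm_in_power_basis[OF r st root xy])
  moreover have "x \<oplus> y \<otimes> r \<in> carrier R" using xy r(1) F_subset by auto
  ultimately show ?thesis by blast
qed

end

end

end

theorem theorem5p1:
  fixes K :: "('a, 'b) ring_scheme" and F :: "'a set" and n :: 'a
  assumes "quadratic_extension K F"
    and "n \<in> F"
  shows "(\<exists>\<alpha> \<in> carrier K. is_norm_of K F \<alpha> n) \<longleftrightarrow>
         (\<exists>M \<in> mat2_carrier F. \<exists>N \<in> mat2_carrier F.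
            n = \<ominus>\<^bsub>K\<^esub> mat2_det K (mat2_commutator K M N) \<and> splits_char_poly K F M)"
proof -
  have K: "field K" and subF: "subfield F K" and dim: "ring.dimension K 2 F (carrier K)"
    using assms(1) unfolding quadratic_extension_def by auto
  interpret field K by (rule K)
  show ?thesis
    using norm_imp_neg_det_commutator[OF subF dim] neg_det_commutator_imp_norm[OF subF dim] by blast
qed

end
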